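(* Let $(G,\sigma)$, $(A,\pi_A)$, $(B,\pi_B)$ be connected signed graphs with $G=A\,\square\,B$ (so $V(G)=V(A)\times V(B)$). Then $\sigma$ is equivalent to the signature of $(A,\pi_A)\,\square\,(B,\pi_B)$ if and only if all three of the following hold: (1) every $A$-layer of $(G,\sigma)$, identified with $A$ via the projection, carries a signature equivalent to $\pi_A$; (2) at least one $B$-layer of $(G,\sigma)$, identified with $B$ via the projection, carries a signature equivalent to $\pi_B$; (3) for every edge $e$ of $A$ and every pair of distinct copies $e_1,e_2$ of $e$ in $G$, if $e_1$ and $e_2$ lie on a common $4$-cycle of $G$, then this $4$-cycle is balanced in $(G,\sigma)$.
   Context: A signed graph $(G,\sigma)$ is a simple loopless undirected graph $G$ with a signature $\sigma:E(G)\to\{+1,-1\}$. Switching a vertex negates the signs of its incident edges; two signatures of the same graph are equivalent if one is obtained from the other by switching a set of vertices. A cycle is balanced if the product of the signs of its edges is $+1$. The Cartesian product $(A,\pi_A)\,\square\,(B,\pi_B)$ is the signed graph on $A\,\square\,B$ where $(a,b_1)(a,b_2)$ has sign $\pi_B(b_1b_2)$ and $(a_1,b)(a_2,b)$ has sign $\pi_A(a_1a_2)$. For $b\in V(B)$, the $A$-layer at $b$ is the subgraph of $G$ induced by $V(A)\times\{b\}$; $B$-layers are defined symmetrically. A copy of an edge $a_1a_2$ of $A$ is an edge $(a_1,b)(a_2,b)$ of $G$ for some $b\in V(B)$. *)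

theory Defs
  imports Main
begin

definition simple_graph :: "'v set \<Rightarrow> 'v set set \<Rightarrow> bool" where
  "simple_graph V E \<longleftrightarrow> finite V \<and> (\<forall>e\<in>E. \<exists>u v. e = {u, v} \<and> u \<noteq> v \<and> u \<in> V \<and> v \<in> V)"

definition connected_graph :: "'v set \<Rightarrow> 'v set set \<Rightarrow> bool" where
  "connected_graph V E \<longleftrightarrow> V \<noteq> {} \<and>
     (\<forall>u\<in>V. \<forall>v\<in>V. (u, v) \<in> {(x, y). {x, y} \<in> E}\<^sup>*)"

definition signature :: "'v set set \<Rightarrow> ('v set \<Rightarrow> int) \<Rightarrow> bool" where
  "signature E s \<longleftrightarrow> (\<forall>e\<in>E. s e = 1 \<or> s e = -1)"

definition switch :: "'v set \<Rightarrow> ('v set \<Rightarrow> int) \<Rightarrow> 'v set \<Rightarrow> int" where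
  "switch S s e = (if card (e \<inter> S) = 1 then - s e else s e)"

definition sig_equiv :: "'v set \<Rightarrow> 'v set set \<Rightarrow> ('v set \<Rightarrow> int) \<Rightarrow> ('v set \<Rightarrow> int) \<Rightarrow> bool" where
  "sig_equiv V E s t \<longleftrightarrow> (\<exists>S\<subseteq>V. \<forall>e\<in>E. t e = switch S s e)"

definition prod_edges :: "'a set \<Rightarrow> 'a set set \<Rightarrow> 'b set \<Rightarrow> 'b set set \<Rightarrow> ('a \<times> 'b) set set" where
  "prod_edges VA EA VB EB =
     {{(a, b1), (a, b2)} | a b1 b2. a \<in> VA \<and> {b1, b2} \<in> EB} \<union>
     {{(a1, b), (a2, b)} | a1 a2 b. {a1, a2} \<in> EA \<and> b \<in> VB}"

text \<open>Signature of the signed Cartesian product: an edge with constant first coordinate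
  is a copy of a B-edge, otherwise a copy of an A-edge.\<close>
definition prod_sig :: "('a set \<Rightarrow> int) \<Rightarrow> ('b set \<Rightarrow> int) \<Rightarrow> ('a \<times> 'b) set \<Rightarrow> int" where
  "prod_sig pA pB e = (if card (fst ` e) = 1 then pB (snd ` e) else pA (fst ` e))"

definition A_copy :: "'a set \<Rightarrow> 'b \<Rightarrow> ('a \<times> 'b) set" where
  "A_copy e b = (\<lambda>a. (a, b)) ` e"

definition B_copy :: "'a \<Rightarrow> 'b set \<Rightarrow> ('a \<times> 'b) set" where
  "B_copy a f = (\<lambda>b. (a, b)) ` f"

definition cycle4 :: "'v set set \<Rightarrow> 'v list \<Rightarrow> bool" where
  "cycle4 E vs \<longleftrightarrow> length vs = 4 \<and> distinct vs \<and>
     (\<forall>i<4. {vs ! i, vs ! ((i + 1) mod 4)} \<in> E)"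

definition cycle_edges :: "'v list \<Rightarrow> 'v set set" where
  "cycle_edges vs = {{vs ! i, vs ! ((i + 1) mod length vs)} | i. i < length vs}"

definition balanced :: "('v set \<Rightarrow> int) \<Rightarrow> 'v list \<Rightarrow> bool" where
  "balanced s vs \<longleftrightarrow> (\<Prod>e\<in>cycle_edges vs. s e) = 1"

end

theory Submission
  imports Defs
begin

text \<open>A switching is encoded by a sign function g, under which the sign of every
  edge uv gets multiplied by g u * g v; in particular it does not change the sign of
  any cycle. If sigma is switching equivalent to the product signature, restricting the sign
  function to the layers gives (1) and (2), and a 4-cycle through two copies of an A-edge in
  different layers consists of these two copies and two copies of one B-edge, so it is
  balanced in the product signature, which gives (3). Conversely, switch every A-layer to pA.
  The balanced squares over an A-edge xy and a B-edge b1b2 then show that the switched sign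
  of (a, b1)(a, b2) does not depend on a, because A is connected. Hence all B-layers carry the
  same signature as the B-layer that is equivalent to pB, and a last switching that depends
  only on the B-coordinate turns it into pB without changing the A-edges.\<close>

definition switch_sign :: "'v set \<Rightarrow> 'v \<Rightarrow> int" where
  "switch_sign S x = (if x \<in> S then -1 else 1)"

lemma switch_doubleton:
  "u \<noteq> v \<Longrightarrow> switch S s {u, v} = switch_sign S u * switch_sign S v * s {u, v}"
  unfolding switch_def switch_sign_def
  by (cases "u \<in> S"; cases "v \<in> S"; simp add: Int_insert_left)

lemma sign_square: "x \<in> {1, -1} \<Longrightarrow> x * x = (1::int)"
  by auto

lemma sign_mult: "x \<in> {1, -1} \<Longrightarrow> y \<in> {1, -1} \<Longrightarrow> x * y \<in> {1, -1::int}"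
  by auto

lemma signature_square: "signature E s \<Longrightarrow> e \<in> E \<Longrightarrow> s e * s e = 1"
  unfolding signature_def by auto

lemma simple_graph_edgeD:
  assumes "simple_graph V E" "{x, y} \<in> E"
  shows "x \<noteq> y" "x \<in> V" "y \<in> V"
proof -
  obtain u v where "{x, y} = {u, v}" "u \<noteq> v" "u \<in> V" "v \<in> V"
    using assms unfolding simple_graph_def by blast
  then show "x \<noteq> y" "x \<in> V" "y \<in> V"
    by (auto simp: doubleton_eq_iff)
qed

lemma simple_graph_edgeE:
  assumes "simple_graph V E" "e \<in> E"
  obtains u v where "e = {u, v}" "u \<noteq> v" "u \<in> V" "v \<in> V"
  using assms unfolding simple_graph_def by blast

lemma sig_equiv_sign_functionI:
  assumes "simple_graph V E" and g: "\<forall>x. g x \<in> {1, -1}"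
    and t: "\<And>u v. {u, v} \<in> E \<Longrightarrow> t {u, v} = g u * g v * s {u, v}"
  shows "sig_equiv V E s t"
proof -
  define S where "S = {x \<in> V. g x = -1}"
  have g_sign: "switch_sign S x = g x" if "x \<in> V" for x
    using g[rule_format, of x] that unfolding switch_sign_def S_def by auto
  have "t e = switch S s e" if e: "e \<in> E" for e
  proof -
    obtain u v where "e = {u, v}" "u \<noteq> v" "u \<in> V" "v \<in> V"
      using simple_graph_edgeE[OF assms(1) e] .
    then show ?thesis
      using t e by (simp add: switch_doubleton g_sign)
  qed
  moreover have "S \<subseteq> V"
    unfolding S_def by blast
  ultimately show ?thesis
    unfolding sig_equiv_def by blast
qed

lemma sig_equiv_sign_functionE:
  assumes "simple_graph V E" "sig_equiv V E s t"
  obtains g where "\<forall>x. g x \<in> {1, -1}"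
    "\<And>u v. {u, v} \<in> E \<Longrightarrow> t {u, v} = g u * g v * s {u, v}"
proof -
  obtain S where S: "\<forall>e\<in>E. t e = switch S s e"
    using assms(2) unfolding sig_equiv_def by blast
  have "t {u, v} = switch_sign S u * switch_sign S v * s {u, v}" if "{u, v} \<in> E" for u v
    using S that simple_graph_edgeD[OF assms(1) that] by (simp add: switch_doubleton)
  moreover have "\<forall>x. switch_sign S x \<in> {1, -1}"
    by (simp add: switch_sign_def)
  ultimately show thesis
    using that by blast
qed

lemma connected_graph_constant:
  assumes "connected_graph V E" and step: "\<And>x y. {x, y} \<in> E \<Longrightarrow> f x = f y"
    and "u \<in> V" "v \<in> V"
  shows "f u = f v"
proof -
  have "(u, v) \<in> {(x, y). {x, y} \<in> E}\<^sup>*"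
    using assms unfolding connected_graph_def by blast
  then show ?thesis
    by (induction rule: rtrancl_induct) (auto dest: step)
qed

lemma cycle_edges_quad:
  "cycle_edges [v0, v1, v2, v3] = {{v0, v1}, {v1, v2}, {v2, v3}, {v3, v0}}"
proof -
  have "cycle_edges [v0, v1, v2, v3] =
      (\<lambda>i. {[v0, v1, v2, v3] ! i, [v0, v1, v2, v3] ! ((i + 1) mod 4)}) ` {..<4}"
    unfolding cycle_edges_def by auto
  also have "{..<4::nat} = {0, 1, 2, 3}" by auto
  finally show ?thesis by simp
qed

lemma balanced_quad_iff:
  assumes "distinct [v0, v1, v2, v3]"
  shows "balanced s [v0, v1, v2, v3] \<longleftrightarrow> s {v0, v1} * s {v1, v2} * s {v2, v3} * s {v3, v0} = 1"
proof -
  have "{v0, v1} \<notin> {{v1, v2}, {v2, v3}, {v3, v0}}" "{v1, v2} \<notin> {{v2, v3}, {v3, v0}}"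
    "{v2, v3} \<noteq> {v3, v0}"
    using assms by (auto simp: doubleton_eq_iff)
  then show ?thesis
    by (simp add: balanced_def cycle_edges_quad mult.assoc)
qed

lemma cycle4_quad_iff:
  "cycle4 E [v0, v1, v2, v3] \<longleftrightarrow>
    distinct [v0, v1, v2, v3] \<and> {v0, v1} \<in> E \<and> {v1, v2} \<in> E \<and> {v2, v3} \<in> E \<and> {v3, v0} \<in> E"
proof -
  have "(\<forall>i<4. P i) \<longleftrightarrow> P 0 \<and> P 1 \<and> P 2 \<and> P (3::nat)" for P
    by (auto simp: less_Suc_eq numeral_eq_Suc)
  then show ?thesis
    unfolding cycle4_def by simp
qed

lemma cycle4_quadE:
  assumes "cycle4 E vs"
  obtains v0 v1 v2 v3 where "vs = [v0, v1, v2, v3]"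
proof -
  have "length vs = 4" using assms unfolding cycle4_def by blast
  then show thesis
    using that by (simp add: length_Suc_conv numeral_eq_Suc) blast
qed

lemma cycle4_balanced_switch:
  assumes "cycle4 E vs" and g: "\<forall>x. g x \<in> {1, -1}"
    and t: "\<And>u v. {u, v} \<in> E \<Longrightarrow> t {u, v} = g u * g v * s {u, v}"
  shows "balanced t vs \<longleftrightarrow> balanced s vs"
proof -
  obtain v0 v1 v2 v3 where vs: "vs = [v0, v1, v2, v3]"
    using cycle4_quadE[OF assms(1)] .
  have d: "distinct [v0, v1, v2, v3]"
    and e: "{v0, v1} \<in> E" "{v1, v2} \<in> E" "{v2, v3} \<in> E" "{v3, v0} \<in> E"
    using assms(1) unfolding vs cycle4_quad_iff by blast+
  have "t {v0, v1} * t {v1, v2} * t {v2, v3} * t {v3, v0} =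
      (g v0 * g v0) * (g v1 * g v1) * (g v2 * g v2) * (g v3 * g v3) *
      (s {v0, v1} * s {v1, v2} * s {v2, v3} * s {v3, v0})"
    unfolding t[OF e(1)] t[OF e(2)] t[OF e(3)] t[OF e(4)] by (simp only: ac_simps)
  also have "\<dots> = s {v0, v1} * s {v1, v2} * s {v2, v3} * s {v3, v0}"
    using g by (simp add: sign_square)
  finally show ?thesis
    unfolding vs balanced_quad_iff[OF d] by simp
qed

lemma cycle4_opposite_edgesE:
  assumes "cycle4 E vs" "X \<in> cycle_edges vs" "Y \<in> cycle_edges vs" "X \<inter> Y = {}"
  obtains x1 x2 y1 y2 where "X = {x1, x2}" "Y = {y1, y2}" "cycle4 E [x1, x2, y1, y2]"
    "cycle_edges vs = cycle_edges [x1, x2, y1, y2]"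
proof -
  obtain v0 v1 v2 v3 where vs: "vs = [v0, v1, v2, v3]"
    using cycle4_quadE[OF assms(1)] .
  have "X = {v0, v1} \<and> Y = {v2, v3} \<or> X = {v2, v3} \<and> Y = {v0, v1} \<or>
      X = {v1, v2} \<and> Y = {v3, v0} \<or> X = {v3, v0} \<and> Y = {v1, v2}"
    using assms(2-4) unfolding vs cycle_edges_quad by (elim insertE emptyE; simp)
  then show thesis
  proof (elim disjE conjE)
    assume "X = {v0, v1}" "Y = {v2, v3}"
    then show thesis using that assms(1) vs by blast
  next
    assume "X = {v2, v3}" "Y = {v0, v1}"
    moreover have "cycle4 E [v2, v3, v0, v1]" "cycle_edges vs = cycle_edges [v2, v3, v0, v1]"
      using assms(1) unfolding vs cycle4_quad_iff cycle_edges_quad by auto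
    ultimately show thesis using that by blast
  next
    assume "X = {v1, v2}" "Y = {v3, v0}"
    moreover have "cycle4 E [v1, v2, v3, v0]" "cycle_edges vs = cycle_edges [v1, v2, v3, v0]"
      using assms(1) unfolding vs cycle4_quad_iff cycle_edges_quad by auto
    ultimately show thesis using that by blast
  next
    assume "X = {v3, v0}" "Y = {v1, v2}"
    moreover have "cycle4 E [v3, v0, v1, v2]" "cycle_edges vs = cycle_edges [v3, v0, v1, v2]"
      using assms(1) unfolding vs cycle4_quad_iff cycle_edges_quad by auto
    ultimately show thesis using that by blast
  qed
qed

lemma prod_edges_iff:
  "{(a1, b1), (a2, b2)} \<in> prod_edges VA EA VB EB \<longleftrightarrow>
    b1 = b2 \<and> b1 \<in> VB \<and> {a1, a2} \<in> EA \<or> a1 = a2 \<and> a1 \<in> VA \<and> {b1, b2} \<in> EB"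
  (is "?e \<in> _ \<longleftrightarrow> _")
proof
  assume "?e \<in> prod_edges VA EA VB EB"
  then show "b1 = b2 \<and> b1 \<in> VB \<and> {a1, a2} \<in> EA \<or> a1 = a2 \<and> a1 \<in> VA \<and> {b1, b2} \<in> EB"
    unfolding prod_edges_def by (auto simp: doubleton_eq_iff insert_commute)
next
  assume "b1 = b2 \<and> b1 \<in> VB \<and> {a1, a2} \<in> EA \<or> a1 = a2 \<and> a1 \<in> VA \<and> {b1, b2} \<in> EB"
  then show "?e \<in> prod_edges VA EA VB EB"
    unfolding prod_edges_def by blast
qed

lemma prod_sig_doubleton:
  "prod_sig pA pB {(a1, b1), (a2, b2)} = (if a1 = a2 then pB {b1, b2} else pA {a1, a2})"
  by (simp add: prod_sig_def)

lemma A_copy_doubleton: "A_copy {a1, a2} b = {(a1, b), (a2, b)}"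
  by (simp add: A_copy_def)

lemma B_copy_doubleton: "B_copy a {b1, b2} = {(a, b1), (a, b2)}"
  by (simp add: B_copy_def)

lemma simple_graph_prod_edges:
  assumes "simple_graph VA EA" "simple_graph VB EB"
  shows "simple_graph (VA \<times> VB) (prod_edges VA EA VB EB)"
  unfolding simple_graph_def
proof (intro conjI ballI)
  show "finite (VA \<times> VB)"
    using assms unfolding simple_graph_def by blast
  fix e assume "e \<in> prod_edges VA EA VB EB"
  then show "\<exists>u v. e = {u, v} \<and> u \<noteq> v \<and> u \<in> VA \<times> VB \<and> v \<in> VA \<times> VB"
    unfolding prod_edges_def using simple_graph_edgeD[OF assms(1)] simple_graph_edgeD[OF assms(2)]
    by fastforce
qed

locale simple_graph_product =
  fixes VA :: "'a set" and EA :: "'a set set" and VB :: "'b set" and EB :: "'b set set"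
  assumes simple_A: "simple_graph VA EA" and simple_B: "simple_graph VB EB"
begin

abbreviation EG :: "('a \<times> 'b) set set" where
  "EG \<equiv> prod_edges VA EA VB EB"

lemma simple_graph_EG: "simple_graph (VA \<times> VB) EG"
  using simple_graph_prod_edges[OF simple_A simple_B] .

lemma A_layer_equiv:
  assumes g: "\<forall>x. g x \<in> {1, -1}"
    and eq: "\<And>u v. {u, v} \<in> EG \<Longrightarrow> prod_sig pA pB {u, v} = g u * g v * sigma {u, v}"
    and "b \<in> VB"
  shows "sig_equiv VA EA (\<lambda>e. sigma (A_copy e b)) pA"
proof (rule sig_equiv_sign_functionI[OF simple_A, of "\<lambda>a. g (a, b)"])
  fix x y assume xy: "{x, y} \<in> EA"
  then have "{(x, b), (y, b)} \<in> EG" "x \<noteq> y"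
    using \<open>b \<in> VB\<close> simple_graph_edgeD[OF simple_A xy] by (auto simp: prod_edges_iff)
  then show "pA {x, y} = g (x, b) * g (y, b) * sigma (A_copy {x, y} b)"
    using eq[of "(x, b)" "(y, b)"] by (simp add: prod_sig_doubleton A_copy_doubleton)
qed (use g in simp)

lemma B_layer_equiv:
  assumes g: "\<forall>x. g x \<in> {1, -1}"
    and eq: "\<And>u v. {u, v} \<in> EG \<Longrightarrow> prod_sig pA pB {u, v} = g u * g v * sigma {u, v}"
    and "a \<in> VA"
  shows "sig_equiv VB EB (\<lambda>f. sigma (B_copy a f)) pB"
proof (rule sig_equiv_sign_functionI[OF simple_B, of "\<lambda>b. g (a, b)"])
  fix x y assume "{x, y} \<in> EB"
  then have "{(a, x), (a, y)} \<in> EG"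
    using \<open>a \<in> VA\<close> by (simp add: prod_edges_iff)
  then show "pB {x, y} = g (a, x) * g (a, y) * sigma (B_copy a {x, y})"
    using eq[of "(a, x)" "(a, y)"] by (simp add: prod_sig_doubleton B_copy_doubleton)
qed (use g in simp)

lemma prod_sig_A_copy:
  assumes "e \<in> EA"
  shows "prod_sig pA pB (A_copy e b) = pA e"
proof -
  obtain x y where "e = {x, y}" "x \<noteq> y"
    using simple_graph_edgeE[OF simple_A assms] by blast
  then show ?thesis
    by (simp add: A_copy_doubleton prod_sig_doubleton)
qed

lemma cycle4_A_copies_balanced:
  assumes "signature EA pA" "signature EB pB" "e \<in> EA" "b1 \<noteq> b2"
    and "cycle4 EG vs" "A_copy e b1 \<in> cycle_edges vs" "A_copy e b2 \<in> cycle_edges vs"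
  shows "balanced (prod_sig pA pB) vs"
proof -
  have "A_copy e b1 \<inter> A_copy e b2 = {}"
    using \<open>b1 \<noteq> b2\<close> unfolding A_copy_def by blast
  then obtain x1 x2 y1 y2 where X: "A_copy e b1 = {x1, x2}" and Y: "A_copy e b2 = {y1, y2}"
    and cyc: "cycle4 EG [x1, x2, y1, y2]" and ce: "cycle_edges vs = cycle_edges [x1, x2, y1, y2]"
    using cycle4_opposite_edgesE[OF assms(5-7)] by blast
  have "x1 \<in> A_copy e b1" "x2 \<in> A_copy e b1" "y1 \<in> A_copy e b2" "y2 \<in> A_copy e b2"
    unfolding X Y by simp_all
  then have layers: "snd x1 = b1" "snd x2 = b1" "snd y1 = b2" "snd y2 = b2"
    unfolding A_copy_def by auto
  have rung: "{b1, b2} \<in> EB \<and> prod_sig pA pB {u, v} = pB {b1, b2}"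
    if "{u, v} \<in> EG" "snd u = b1" "snd v = b2" for u v
    using that \<open>b1 \<noteq> b2\<close> by (cases u; cases v) (auto simp: prod_edges_iff prod_sig_doubleton)
  have "{x2, y1} \<in> EG" "{x1, y2} \<in> EG" and d: "distinct [x1, x2, y1, y2]"
    using cyc by (simp_all add: cycle4_quad_iff insert_commute)
  then have "{b1, b2} \<in> EB" "prod_sig pA pB {x2, y1} = pB {b1, b2}"
      "prod_sig pA pB {y2, x1} = pB {b1, b2}"
    using rung[of x2 y1] rung[of x1 y2] layers by (simp_all add: insert_commute)
  moreover have "prod_sig pA pB {x1, x2} = pA e" "prod_sig pA pB {y1, y2} = pA e"
    using prod_sig_A_copy[OF \<open>e \<in> EA\<close>, of pA pB b1] prod_sig_A_copy[OF \<open>e \<in> EA\<close>, of pA pB b2]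
    unfolding X Y by simp_all
  ultimately have "prod_sig pA pB {x1, x2} * prod_sig pA pB {x2, y1} * prod_sig pA pB {y1, y2} *
      prod_sig pA pB {y2, x1} = (pA e * pA e) * (pB {b1, b2} * pB {b1, b2})"
    by (simp only: ac_simps)
  also have "\<dots> = 1"
    using signature_square[OF assms(1) \<open>e \<in> EA\<close>] signature_square[OF assms(2) \<open>{b1, b2} \<in> EB\<close>]
    by simp
  finally have "balanced (prod_sig pA pB) [x1, x2, y1, y2]"
    using balanced_quad_iff[OF d] by blast
  then show ?thesis
    unfolding balanced_def ce .
qed

lemma square_cycle4:
  assumes "{x, y} \<in> EA" "{b1, b2} \<in> EB"
  shows "cycle4 EG [(x, b1), (y, b1), (y, b2), (x, b2)]"
    and "A_copy {x, y} b1 \<in> cycle_edges [(x, b1), (y, b1), (y, b2), (x, b2)]"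
    and "A_copy {x, y} b2 \<in> cycle_edges [(x, b1), (y, b1), (y, b2), (x, b2)]"
proof -
  have "x \<noteq> y" "x \<in> VA" "y \<in> VA" "b1 \<noteq> b2" "b1 \<in> VB" "b2 \<in> VB"
    using simple_graph_edgeD[OF simple_A assms(1)] simple_graph_edgeD[OF simple_B assms(2)] by auto
  then show "cycle4 EG [(x, b1), (y, b1), (y, b2), (x, b2)]"
    using assms by (simp add: cycle4_quad_iff prod_edges_iff insert_commute)
  show "A_copy {x, y} b1 \<in> cycle_edges [(x, b1), (y, b1), (y, b2), (x, b2)]"
    "A_copy {x, y} b2 \<in> cycle_edges [(x, b1), (y, b1), (y, b2), (x, b2)]"
    by (simp_all add: A_copy_doubleton cycle_edges_quad insert_commute)
qed

end

locale A_layers_switched = simple_graph_product VA EA VB EB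
  for VA :: "'a set" and EA :: "'a set set" and VB :: "'b set" and EB :: "'b set set" +
  fixes pA :: "'a set \<Rightarrow> int" and sigma :: "('a \<times> 'b) set \<Rightarrow> int" and g :: "'b \<Rightarrow> 'a \<Rightarrow> int"
  assumes connected_A: "connected_graph VA EA"
    and signature_A: "signature EA pA"
    and signature_sigma: "signature EG sigma"
    and g_sign: "g b x \<in> {1, -1}"
    and A_layer_switched:
      "b \<in> VB \<Longrightarrow> {x, y} \<in> EA \<Longrightarrow> pA {x, y} = g b x * g b y * sigma {(x, b), (y, b)}"
    and squares_balanced: "{x, y} \<in> EA \<Longrightarrow> {b1, b2} \<in> EB \<Longrightarrow>
      balanced sigma [(x, b1), (y, b1), (y, b2), (x, b2)]"
begin

lemma g_square: "g b x * g b x = 1"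
  using g_sign by (rule sign_square)

lemma B_edge_sign_transport:
  assumes "{b1, b2} \<in> EB" "a \<in> VA" "a' \<in> VA"
  shows "g b1 a * g b2 a * sigma {(a, b1), (a, b2)} =
    g b1 a' * g b2 a' * sigma {(a', b1), (a', b2)}"
proof -
  have b: "b1 \<noteq> b2" "b1 \<in> VB" "b2 \<in> VB"
    using simple_graph_edgeD[OF simple_B \<open>{b1, b2} \<in> EB\<close>] by auto
  define F where "F z = g b1 z * g b2 z * sigma {(z, b1), (z, b2)}" for z
  have "F x = F y" if xy: "{x, y} \<in> EA" for x y
  proof -
    have x: "x \<noteq> y" "x \<in> VA" "y \<in> VA"
      using simple_graph_edgeD[OF simple_A xy] by auto
    let ?s1 = "sigma {(x, b1), (y, b1)}" and ?s2 = "sigma {(x, b2), (y, b2)}"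
      and ?sx = "sigma {(x, b1), (x, b2)}" and ?sy = "sigma {(y, b1), (y, b2)}"
    have "{(x, b1), (y, b1)} \<in> EG" "{(x, b2), (y, b2)} \<in> EG" "{(y, b1), (y, b2)} \<in> EG"
      using xy x b \<open>{b1, b2} \<in> EB\<close> by (simp_all add: prod_edges_iff)
    then have sq: "?s1 * ?s1 = 1" "?s2 * ?s2 = 1" "?sy * ?sy = 1"
      using signature_square[OF signature_sigma] by blast+
    have balance: "?s1 * ?sy * ?s2 * ?sx = 1"
      using squares_balanced[OF xy \<open>{b1, b2} \<in> EB\<close>] x b
      by (simp add: balanced_quad_iff insert_commute)
    txt \<open>Up to squares, F x * F y is the sign of the square over xy and b1b2 after switching
      both A-layers, whose two A-edges then both carry pA {x, y}.\<close>
    have "F x * F y = (g b1 x * g b1 y * ?s1) * (g b2 x * g b2 y * ?s2) * (?s1 * ?sy * ?s2 * ?sx)"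
    proof -
      have "(g b1 x * g b1 y * ?s1) * (g b2 x * g b2 y * ?s2) * (?s1 * ?sy * ?s2 * ?sx) =
          F x * F y * (?s1 * ?s1) * (?s2 * ?s2)"
        unfolding F_def by (simp only: ac_simps)
      then show ?thesis
        using sq by simp
    qed
    also have "\<dots> = pA {x, y} * pA {x, y}"
      using A_layer_switched[OF b(2) xy] A_layer_switched[OF b(3) xy] balance by simp
    also have "\<dots> = 1"
      using signature_square[OF signature_A xy] .
    finally have "F x * F y = 1" .
    moreover have "F y * F y = 1"
      using g_square sq(3) unfolding F_def by (simp add: ac_simps)
    ultimately show "F x = F y"
      by (metis mult.assoc mult_1_right)
  qed
  then show ?thesis
    using connected_graph_constant[OF connected_A _ \<open>a \<in> VA\<close> \<open>a' \<in> VA\<close>, of F]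
    unfolding F_def by blast
qed

lemma B_edge_switched:
  assumes "a0 \<in> VA" "{b1, b2} \<in> EB" "a \<in> VA"
    and "pB {b1, b2} = t b1 * t b2 * sigma {(a0, b1), (a0, b2)}"
  shows "pB {b1, b2} =
    (g b1 a * g b1 a0 * t b1) * (g b2 a * g b2 a0 * t b2) * sigma {(a, b1), (a, b2)}"
proof -
  let ?s = "\<lambda>a. sigma {(a, b1), (a, b2)}"
  have "pB {b1, b2} = t b1 * t b2 * g b1 a0 * g b2 a0 * (g b1 a0 * g b2 a0 * ?s a0)"
    using assms(4) by (simp add: ac_simps g_square)
  also have "\<dots> = t b1 * t b2 * g b1 a0 * g b2 a0 * (g b1 a * g b2 a * ?s a)"
    using B_edge_sign_transport[OF assms(2,3,1)] by simp
  finally show ?thesis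
    by (simp only: ac_simps)
qed

lemma prod_sig_equiv_if_B_layer_switched:
  assumes "a0 \<in> VA" and t: "\<And>b. t b \<in> {1, -1}"
    and B_layer: "\<And>b1 b2. {b1, b2} \<in> EB \<Longrightarrow> pB {b1, b2} = t b1 * t b2 * sigma {(a0, b1), (a0, b2)}"
  shows "sig_equiv (VA \<times> VB) EG sigma (prod_sig pA pB)"
proof -
  txt \<open>The factor g b a0 * t b depends only on b, so it leaves the A-edges, already
    switched to pA by g b, unchanged.\<close>
  define h where "h p = g (snd p) (fst p) * g (snd p) a0 * t (snd p)" for p
  have "prod_sig pA pB {u, v} = h u * h v * sigma {u, v}" if uv: "{u, v} \<in> EG" for u v
  proof -
    obtain a1 b1 a2 b2 where u: "u = (a1, b1)" and v: "v = (a2, b2)"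
      by (cases u, cases v) blast
    consider (A_edge) "b1 = b2" "b1 \<in> VB" "{a1, a2} \<in> EA"
      | (B_edge) "a1 = a2" "a1 \<in> VA" "{b1, b2} \<in> EB"
      using uv unfolding u v prod_edges_iff by blast
    then show ?thesis
    proof cases
      case A_edge
      have "a1 \<noteq> a2"
        using simple_graph_edgeD[OF simple_A \<open>{a1, a2} \<in> EA\<close>] by blast
      then have "prod_sig pA pB {u, v} = g b1 a1 * g b1 a2 * sigma {u, v}"
        using A_layer_switched[OF A_edge(2,3)] A_edge(1) by (simp add: u v prod_sig_doubleton)
      also have "\<dots> = (g b1 a1 * g b1 a2 * sigma {u, v}) * (g b1 a0 * g b1 a0) * (t b1 * t b1)"
        using t[of b1] by (simp add: g_square sign_square)
      also have "\<dots> = h u * h v * sigma {u, v}"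
        unfolding h_def u v A_edge(1) by (simp only: fst_conv snd_conv ac_simps)
      finally show ?thesis .
    next
      case B_edge
      then show ?thesis
        using B_edge_switched[where pB = pB and t = t,
            OF \<open>a0 \<in> VA\<close> B_edge(3,2) B_layer[OF B_edge(3)]]
        by (simp add: u v h_def prod_sig_doubleton)
    qed
  qed
  moreover have "\<forall>p. h p \<in> {1, -1}"
    unfolding h_def by (intro allI sign_mult g_sign t)
  ultimately show ?thesis
    by (intro sig_equiv_sign_functionI[OF simple_graph_EG, of h]) auto
qed

end

context simple_graph_product
begin

lemma prod_sig_equiv_if_layers_equiv:
  assumes "connected_graph VA EA" "signature EA pA" "signature EG sigma"
    and A_layers: "\<forall>b\<in>VB. sig_equiv VA EA (\<lambda>e. sigma (A_copy e b)) pA"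
    and B_layer: "a0 \<in> VA" "sig_equiv VB EB (\<lambda>f. sigma (B_copy a0 f)) pB"
    and squares: "\<forall>e\<in>EA. \<forall>b1\<in>VB. \<forall>b2\<in>VB. \<forall>vs. b1 \<noteq> b2 \<and> cycle4 EG vs \<and>
      A_copy e b1 \<in> cycle_edges vs \<and> A_copy e b2 \<in> cycle_edges vs \<longrightarrow> balanced sigma vs"
  shows "sig_equiv (VA \<times> VB) EG sigma (prod_sig pA pB)"
proof -
  have "\<exists>g. (\<forall>x. g x \<in> {1, -1}) \<and>
      (b \<in> VB \<longrightarrow> (\<forall>x y. {x, y} \<in> EA \<longrightarrow> pA {x, y} = g x * g y * sigma {(x, b), (y, b)}))" for b
  proof (cases "b \<in> VB")
    case True
    then obtain g where "\<forall>x. g x \<in> {1, -1}"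
      "\<And>x y. {x, y} \<in> EA \<Longrightarrow> pA {x, y} = g x * g y * sigma (A_copy {x, y} b)"
      using sig_equiv_sign_functionE[OF simple_A] A_layers by blast
    then show ?thesis
      by (auto simp: A_copy_doubleton)
  qed auto
  then obtain g where g: "\<And>b x. g b x \<in> {1, -1}"
    and g_eq: "\<And>b x y. b \<in> VB \<Longrightarrow> {x, y} \<in> EA \<Longrightarrow>
      pA {x, y} = g b x * g b y * sigma {(x, b), (y, b)}"
    by metis
  obtain t where t: "\<forall>b. t b \<in> {1, -1}"
    and t_eq: "\<And>b1 b2. {b1, b2} \<in> EB \<Longrightarrow> pB {b1, b2} = t b1 * t b2 * sigma (B_copy a0 {b1, b2})"
    using sig_equiv_sign_functionE[OF simple_B B_layer(2)] by blast
  have square_balanced: "balanced sigma [(x, b1), (y, b1), (y, b2), (x, b2)]"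
    if "{x, y} \<in> EA" "{b1, b2} \<in> EB" for x y b1 b2
    using squares square_cycle4[OF that] simple_graph_edgeD[OF simple_B that(2)] that(1) by blast
  interpret A_layers_switched VA EA VB EB pA sigma g
    using assms(1-3) g g_eq square_balanced by unfold_locales auto
  show ?thesis
    using prod_sig_equiv_if_B_layer_switched[OF B_layer(1), of t pB] t t_eq
    by (simp add: B_copy_doubleton)
qed

end

theorem lemma4p8:
  fixes VA :: "'a set" and EA :: "'a set set" and pA :: "'a set \<Rightarrow> int"
    and VB :: "'b set" and EB :: "'b set set" and pB :: "'b set \<Rightarrow> int"
    and sigma :: "('a \<times> 'b) set \<Rightarrow> int"
  assumes "simple_graph VA EA" and "connected_graph VA EA" and "signature EA pA"
    and "simple_graph VB EB" and "connected_graph VB EB" and "signature EB pB"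
    and "connected_graph (VA \<times> VB) (prod_edges VA EA VB EB)"
    and "signature (prod_edges VA EA VB EB) sigma"
  shows "sig_equiv (VA \<times> VB) (prod_edges VA EA VB EB) sigma (prod_sig pA pB) \<longleftrightarrow>
    ((\<forall>b\<in>VB. sig_equiv VA EA (\<lambda>e. sigma (A_copy e b)) pA) \<and>
     (\<exists>a\<in>VA. sig_equiv VB EB (\<lambda>f. sigma (B_copy a f)) pB) \<and>
     (\<forall>e\<in>EA. \<forall>b1\<in>VB. \<forall>b2\<in>VB. \<forall>vs. b1 \<noteq> b2 \<and> cycle4 (prod_edges VA EA VB EB) vs \<and>
        A_copy e b1 \<in> cycle_edges vs \<and> A_copy e b2 \<in> cycle_edges vs \<longrightarrow> balanced sigma vs))"
    (is "?L \<longleftrightarrow> ?R")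
proof -
  interpret simple_graph_product VA EA VB EB
    using assms(1,4) by unfold_locales
  show ?thesis
  proof
    assume ?L
    then obtain g where g: "\<forall>x. g x \<in> {1, -1}"
      and eq: "\<And>u v. {u, v} \<in> EG \<Longrightarrow> prod_sig pA pB {u, v} = g u * g v * sigma {u, v}"
      using sig_equiv_sign_functionE[OF simple_graph_EG] by blast
    obtain a0 where "a0 \<in> VA"
      using assms(2) unfolding connected_graph_def by blast
    have "balanced sigma vs" if "e \<in> EA" "b1 \<noteq> b2" "cycle4 EG vs"
      "A_copy e b1 \<in> cycle_edges vs" "A_copy e b2 \<in> cycle_edges vs" for e b1 b2 vs
      using cycle4_A_copies_balanced[OF assms(3,6) that] cycle4_balanced_switch[OF that(3) g eq]
      by blast
    then show ?R
      using A_layer_equiv[OF g eq] B_layer_equiv[OF g eq \<open>a0 \<in> VA\<close>] \<open>a0 \<in> VA\<close> by blast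
  next
    assume ?R
    then show ?L
      using prod_sig_equiv_if_layers_equiv[OF assms(2,3,8)] by blast
  qed
qed

end
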